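(* Let $(\Omega,\mathcal A)$ be a measurable space and let $K$ be a random compact set in $\mathbb C^n$. Then $\widehat K=R\widehat K$, i.e. for every $\omega$, $\widehat{K(\omega)}=\{z\in\mathbb C^n:|p(\omega,z)|\le\max_{x\in K(\omega)}|p(\omega,x)| \text{ for all random polynomials } p\}$.
   Context: A random compact set is a measurable map from $\Omega$ to the space of non-empty compact subsets of $\mathbb C^n$ with the Hausdorff distance and its Borel $\sigma$-algebra. A random polynomial is a function $p:\Omega\times\mathbb C^n\to\mathbb C$ with $p(\omega,\cdot)$ a polynomial for each $\omega$ and $p(\cdot,z)$ measurable for each $z$. $\widehat L=\{z:|p(z)|\le\max_L|p| \text{ for all polynomials } p\}$. *)

theory Defs
  imports "HOL-Analysis.Analysis"
begin

definition cpoly_fun :: "(complex ^ 'n::finite \<Rightarrow> complex) \<Rightarrow> bool" where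
  "cpoly_fun f \<longleftrightarrow> (\<exists>A :: (nat ^ 'n) set. \<exists>c :: nat ^ 'n \<Rightarrow> complex. finite A \<and>
     (\<forall>z. f z = (\<Sum>\<alpha>\<in>A. c \<alpha> * (\<Prod>i\<in>UNIV. (z $ i) ^ (\<alpha> $ i)))))"

definition poly_hull :: "(complex ^ 'n::finite) set \<Rightarrow> (complex ^ 'n) set" where
  "poly_hull L = {z. \<forall>p. cpoly_fun p \<longrightarrow> norm (p z) \<le> (SUP x\<in>L. norm (p x))}"

definition hausdorff_dist :: "'a::metric_space set \<Rightarrow> 'a set \<Rightarrow> real" where
  "hausdorff_dist A B = max (SUP a\<in>A. infdist a B) (SUP b\<in>B. infdist b A)"

definition ne_compacts :: "'a::metric_space set set" where
  "ne_compacts = {S. compact S \<and> S \<noteq> {}}"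

definition hausdorff_open :: "'a::metric_space set set \<Rightarrow> bool" where
  "hausdorff_open U \<longleftrightarrow> U \<subseteq> ne_compacts \<and>
     (\<forall>A\<in>U. \<exists>e>0. \<forall>B\<in>ne_compacts. hausdorff_dist A B < e \<longrightarrow> B \<in> U)"

definition hausdorff_borel :: "'a::metric_space set measure" where
  "hausdorff_borel = sigma ne_compacts {U. hausdorff_open U}"

definition random_compact_set :: "'w measure \<Rightarrow> ('w \<Rightarrow> 'a::metric_space set) \<Rightarrow> bool" where
  "random_compact_set M K \<longleftrightarrow> K \<in> measurable M hausdorff_borel"

definition random_poly :: "'w measure \<Rightarrow> ('w \<Rightarrow> complex ^ 'n::finite \<Rightarrow> complex) \<Rightarrow> bool" where
  "random_poly M p \<longleftrightarrow> (\<forall>\<omega>\<in>space M. cpoly_fun (p \<omega>)) \<and>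
     (\<forall>z. (\<lambda>\<omega>. p \<omega> z) \<in> borel_measurable M)"

end

theory Submission
  imports Defs
begin

(* Every random polynomial is a polynomial in z at each fixed \<omega>, and every polynomial is a
   random polynomial that does not depend on \<omega>. So both hulls are cut out by the same family
   of polynomials. *)

lemma random_poly_const:
  assumes "cpoly_fun q"
  shows "random_poly M (\<lambda>_. q)"
  using assms unfolding random_poly_def by simp

lemma random_poly_cpoly_fun:
  assumes "random_poly M p" and "\<omega> \<in> space M"
  shows "cpoly_fun (p \<omega>)"
  using assms unfolding random_poly_def by simp

theorem proposition6p15:
  fixes M :: "'w measure" and K :: "'w \<Rightarrow> (complex ^ 'n::finite) set"
  assumes "random_compact_set M K"
  shows "\<forall>\<omega>\<in>space M. poly_hull (K \<omega>) =
           {z. \<forall>p. random_poly M p \<longrightarrow> norm (p \<omega> z) \<le> (SUP x\<in>K \<omega>. norm (p \<omega> x))}"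
proof (intro ballI set_eqI iffI)
  fix \<omega> z
  assume \<omega>: "\<omega> \<in> space M"
  show "z \<in> {z. \<forall>p. random_poly M p \<longrightarrow> norm (p \<omega> z) \<le> (SUP x\<in>K \<omega>. norm (p \<omega> x))}"
    if "z \<in> poly_hull (K \<omega>)"
    using that random_poly_cpoly_fun[OF _ \<omega>] unfolding poly_hull_def by blast
  show "z \<in> poly_hull (K \<omega>)"
    if "z \<in> {z. \<forall>p. random_poly M p \<longrightarrow> norm (p \<omega> z) \<le> (SUP x\<in>K \<omega>. norm (p \<omega> x))}"
    using that random_poly_const[of _ M] unfolding poly_hull_def by fastforce
qed

end
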